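(* Let $X$ be a real Banach space. Then the set $\mathcal{F}(X)$ of Flinn elements of $X$ is norm-closed in $X$.
   Context: A bounded linear operator $T:X\to X$ on a real Banach space is numerically positive if for every $x\in X$ and every $x^*\in X^*$ with $\|x^*\|^2=\|x\|^2=x^*(x)$ one has $x^*(Tx)\ge 0$. An element $u\in X$ is a Flinn element if there is a numerically positive linear projection of $X$ onto $\operatorname{span}\{u\}$; for $u\neq 0$ this means there exists $f\in X^*$ with $f(u)=1$ such that the map $f\otimes u: x\mapsto f(x)u$ is numerically positive. The element $0$ is a Flinn element. $\mathcal{F}(X)$ denotes the set of all Flinn elements of $X$. *)

theory Defs
  imports "HOL-Analysis.Analysis"
begin

definition numerically_positive :: "('a::real_normed_vector \<Rightarrow> 'a) \<Rightarrow> bool" where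
  "numerically_positive T \<longleftrightarrow> bounded_linear T \<and>
     (\<forall>x. \<forall>xs :: 'a \<Rightarrow>\<^sub>L real.
        (norm xs)\<^sup>2 = (norm x)\<^sup>2 \<and> (norm x)\<^sup>2 = blinfun_apply xs x
          \<longrightarrow> blinfun_apply xs (T x) \<ge> 0)"

definition flinn_element :: "'a::real_normed_vector \<Rightarrow> bool" where
  "flinn_element u \<longleftrightarrow> u = 0 \<or>
     (\<exists>f :: 'a \<Rightarrow>\<^sub>L real. blinfun_apply f u = 1 \<and>
        numerically_positive (\<lambda>x. blinfun_apply f x *\<^sub>R u))"

definition flinn_set :: "'a::real_normed_vector set" where
  "flinn_set = {u. flinn_element u}"

end

theory Submission
  imports Defs
begin

(* Let u_m -> l <> 0 with Flinn functionals f_m for u_m. Numerical positivity of x |-> f_m(x) u_m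
   gives ||x|| <= ||x + f_m(x) u_m|| for all x, and testing this on x = u_m - (2 / f_m(z)) z yields
   ||f_m|| ||u_m|| <= 4, so the f_m are eventually bounded by 8 / ||l||. By Tychonoff they have a
   cluster point phi in the product topology of 'a => real; phi is bounded linear, phi(l) = 1, and
   the inequalities x*(f_m(x) u_m) >= 0 pass to the limit x*(phi(x) l) >= 0.
   The duality functionals x* (with ||x*|| = ||x|| and x*(x) = ||x||^2) come from the Hahn-Banach
   theorem, which follows from the fact that a minimal sublinear functional is linear. *)

definition sublinear :: "('a::real_vector \<Rightarrow> real) \<Rightarrow> bool" where
  "sublinear p \<longleftrightarrow> (\<forall>x y. p (x + y) \<le> p x + p y) \<and> (\<forall>c x. 0 < c \<longrightarrow> p (c *\<^sub>R x) = c * p x)"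

lemma sublinear_add_le: "sublinear p \<Longrightarrow> p (x + y) \<le> p x + p y"
  unfolding sublinear_def by blast

lemma sublinear_scaleR_pos: "sublinear p \<Longrightarrow> 0 < c \<Longrightarrow> p (c *\<^sub>R x) = c * p x"
  unfolding sublinear_def by blast

lemma sublinear_zero: "sublinear p \<Longrightarrow> p 0 = 0"
  using sublinear_scaleR_pos[of p 2 0] by simp

lemma sublinear_scaleR_nonneg: "sublinear p \<Longrightarrow> 0 \<le> c \<Longrightarrow> p (c *\<^sub>R x) = c * p x"
  by (cases "c = 0") (auto simp: sublinear_zero sublinear_scaleR_pos)

lemma sublinear_neg_le: "sublinear p \<Longrightarrow> - p (- x) \<le> p x"
  using sublinear_add_le[of p x "- x"] sublinear_zero[of p] by simp

lemma bdd_below_sublinear_below: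
  assumes below: "\<And>q. q \<in> C \<Longrightarrow> sublinear q \<and> q \<le> p"
  shows "bdd_below ((\<lambda>q. q x) ` C)"
proof (rule bdd_belowI2)
  fix q assume "q \<in> C"
  then have "sublinear q" "q (- x) \<le> p (- x)" using below by (auto simp: le_fun_def)
  then show "- p (- x) \<le> q x" using sublinear_neg_le[of q x] by linarith
qed

lemma sublinear_INF_chain:
  fixes C :: "('a::real_vector \<Rightarrow> real) set"
  assumes "C \<noteq> {}" and chain: "Complete_Partial_Order.chain (\<le>) C"
    and below: "\<And>q. q \<in> C \<Longrightarrow> sublinear q \<and> q \<le> p"
  shows "sublinear (\<lambda>x. INF q\<in>C. q x)"
proof -
  define u where "u x = (INF q\<in>C. q x)" for x
  have bdd: "bdd_below ((\<lambda>q. q x) ` C)" for x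
    using below by (rule bdd_below_sublinear_below)
  then have u_le: "u x \<le> q x" if "q \<in> C" for q x
    unfolding u_def using that by (intro cInf_lower) auto
  have le_u: "z \<le> u x" if "\<And>q. q \<in> C \<Longrightarrow> z \<le> q x" for z x
    unfolding u_def using that \<open>C \<noteq> {}\<close> by (intro cInf_greatest) auto
  have "u (x + y) \<le> u x + u y" for x y
  proof -
    have "u (x + y) \<le> q x + r y" if "q \<in> C" "r \<in> C" for q r
    proof -
      obtain s where s: "s \<in> C" "s \<le> q" "s \<le> r"
        using chain \<open>q \<in> C\<close> \<open>r \<in> C\<close> unfolding chain_def by blast
      have "u (x + y) \<le> s (x + y)" using u_le s(1) .
      also have "\<dots> \<le> s x + s y" using below s(1) sublinear_add_le by blast
      also have "\<dots> \<le> q x + r y" using s(2,3) by (simp add: le_fun_def add_mono)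
      finally show ?thesis .
    qed
    then have "u (x + y) - r y \<le> u x" if "r \<in> C" for r
      using that by (force intro: le_u)
    then have "u (x + y) - u x \<le> u y"
      by (force intro: le_u)
    then show ?thesis by simp
  qed
  moreover have "u (c *\<^sub>R x) = c * u x" if "0 < c" for c x
  proof -
    have "u (c *\<^sub>R x) = (INF q\<in>C. c * q x)"
      unfolding u_def using below sublinear_scaleR_pos \<open>0 < c\<close> by (metis (no_types, lifting) INF_cong)
    also have "\<dots> = Inf ((*) c ` (\<lambda>q. q x) ` C)"
      by (simp add: image_image)
    also have "\<dots> = c * u x"
      unfolding u_def using \<open>0 < c\<close> \<open>C \<noteq> {}\<close> bdd
      by (intro continuous_at_Inf_mono[symmetric]) (auto intro: monoI continuous_intros)
    finally show ?thesis .
  qed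
  ultimately show ?thesis unfolding sublinear_def u_def by blast
qed

lemma exists_minimal_sublinear_below:
  assumes p: "sublinear (p :: 'a::real_vector \<Rightarrow> real)"
  obtains m where "sublinear m" "m \<le> p" "\<And>q. sublinear q \<Longrightarrow> q \<le> m \<Longrightarrow> q = m"
proof -
  let ?A = "{q. sublinear q \<and> q \<le> p}"
  let ?P = "\<lambda>a b :: 'a \<Rightarrow> real. b \<le> a"
  have "partial_order_on ?A (relation_of ?P ?A)"
    by (rule partial_order_on_relation_ofI) auto
  moreover have "\<exists>u \<in> ?A. \<forall>q \<in> C. u \<le> q" if "C \<in> Chains (relation_of ?P ?A)" for C
  proof (cases "C = {}")
    case True
    then show ?thesis using p by auto
  next
    case False
    have C: "C \<subseteq> ?A" "Complete_Partial_Order.chain (\<le>) C"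
      using that unfolding Chains_def relation_of_def chain_def by auto
    define u where "u x = (INF q\<in>C. q x)" for x
    have "sublinear u"
      unfolding u_def using False C by (intro sublinear_INF_chain) auto
    moreover have "u \<le> q" if "q \<in> C" for q
    proof (rule le_funI)
      fix x
      have "bdd_below ((\<lambda>q. q x) ` C)" using C(1) by (intro bdd_below_sublinear_below) auto
      then show "u x \<le> q x" unfolding u_def using that by (simp add: cInf_lower)
    qed
    moreover obtain q where "q \<in> C" using False by blast
    ultimately show ?thesis using C(1) by (blast intro: order_trans)
  qed
  ultimately obtain m where "m \<in> ?A" "\<And>q. q \<in> ?A \<Longrightarrow> q \<le> m \<Longrightarrow> q = m"
    using predicate_Zorn[of ?A ?P] by blast
  then show ?thesis using that by (auto intro: order_trans)
qed

(* Taking t = 0 and t = 1 shows sublinear_shift p y <= p and sublinear_shift p y (- y) <= - p y,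
   so a minimal sublinear functional equals its shifts and is therefore odd. *)
definition sublinear_shift :: "('a::real_vector \<Rightarrow> real) \<Rightarrow> 'a \<Rightarrow> 'a \<Rightarrow> real" where
  "sublinear_shift p y x = (INF t\<in>{0..}. p (x + t *\<^sub>R y) - t * p y)"

lemma sublinear_shift_le:
  assumes p: "sublinear p" and t: "0 \<le> t"
  shows "sublinear_shift p y x \<le> p (x + t *\<^sub>R y) - t * p y"
proof -
  have "- p (- x) \<le> p (x + s *\<^sub>R y) - s * p y" if "0 \<le> s" for s
    using sublinear_add_le[OF p, of "x + s *\<^sub>R y" "- x"] sublinear_scaleR_nonneg[OF p that]
    by simp
  then have "bdd_below ((\<lambda>s. p (x + s *\<^sub>R y) - s * p y) ` {0..})"
    by (intro bdd_belowI2) auto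
  then show ?thesis unfolding sublinear_shift_def using t by (intro cInf_lower) auto
qed

lemma le_sublinear_shift:
  "(\<And>t. 0 \<le> t \<Longrightarrow> z \<le> p (x + t *\<^sub>R y) - t * p y) \<Longrightarrow> z \<le> sublinear_shift p y x"
  unfolding sublinear_shift_def by (intro cInf_greatest) auto

lemma sublinear_shift_add_le:
  assumes p: "sublinear p"
  shows "sublinear_shift p y (a + b) \<le> sublinear_shift p y a + sublinear_shift p y b"
proof -
  let ?s = "sublinear_shift p y"
  have "?s (a + b) - (p (a + t1 *\<^sub>R y) - t1 * p y) \<le> ?s b" if "0 \<le> t1" for t1
  proof (rule le_sublinear_shift)
    fix t2 :: real assume "0 \<le> t2"
    have "?s (a + b) \<le> p ((a + b) + (t1 + t2) *\<^sub>R y) - (t1 + t2) * p y"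
      using sublinear_shift_le[OF p] \<open>0 \<le> t1\<close> \<open>0 \<le> t2\<close> by simp
    also have "p ((a + b) + (t1 + t2) *\<^sub>R y) \<le> p (a + t1 *\<^sub>R y) + p (b + t2 *\<^sub>R y)"
      using sublinear_add_le[OF p, of "a + t1 *\<^sub>R y" "b + t2 *\<^sub>R y"] by (simp add: algebra_simps)
    finally show "?s (a + b) - (p (a + t1 *\<^sub>R y) - t1 * p y) \<le> p (b + t2 *\<^sub>R y) - t2 * p y"
      by (simp add: algebra_simps)
  qed
  then have "?s (a + b) - ?s b \<le> ?s a"
    by (intro le_sublinear_shift) (simp add: algebra_simps)
  then show ?thesis by simp
qed

lemma sublinear_shift_scaleR_pos:
  assumes p: "sublinear p" and c: "0 < c"
  shows "sublinear_shift p y (c *\<^sub>R x) = c * sublinear_shift p y x"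
proof -
  let ?s = "sublinear_shift p y"
  have scale: "p (c *\<^sub>R x + (c * t) *\<^sub>R y) - (c * t) * p y = c * (p (x + t *\<^sub>R y) - t * p y)" for t
    using sublinear_scaleR_pos[OF p c, of "x + t *\<^sub>R y"] by (simp add: algebra_simps)
  have "?s (c *\<^sub>R x) / c \<le> ?s x"
  proof (rule le_sublinear_shift)
    fix t :: real assume "0 \<le> t"
    then have "?s (c *\<^sub>R x) \<le> p (c *\<^sub>R x + (c * t) *\<^sub>R y) - (c * t) * p y"
      using sublinear_shift_le[OF p] c by simp
    then have "?s (c *\<^sub>R x) \<le> c * (p (x + t *\<^sub>R y) - t * p y)"
      using scale[of t] by simp
    then show "?s (c *\<^sub>R x) / c \<le> p (x + t *\<^sub>R y) - t * p y" using c by (simp add: field_simps)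
  qed
  moreover have "c * ?s x \<le> ?s (c *\<^sub>R x)"
  proof (rule le_sublinear_shift)
    fix t :: real assume "0 \<le> t"
    then have "?s x \<le> p (x + (t / c) *\<^sub>R y) - (t / c) * p y"
      using sublinear_shift_le[OF p, of "t / c"] c by simp
    then show "c * ?s x \<le> p (c *\<^sub>R x + t *\<^sub>R y) - t * p y"
      using scale[of "t / c"] c by (simp add: mult_left_mono)
  qed
  ultimately show ?thesis using c by (simp add: field_simps)
qed

lemma sublinear_sublinear_shift: "sublinear p \<Longrightarrow> sublinear (sublinear_shift p y)"
  using sublinear_shift_add_le sublinear_shift_scaleR_pos unfolding sublinear_def[of "sublinear_shift p y"]
  by metis

lemma minimal_sublinear_imp_linear:
  assumes q: "sublinear q" and minimal: "\<And>r. sublinear r \<Longrightarrow> r \<le> q \<Longrightarrow> r = q"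
  shows "linear q"
proof -
  have odd: "q (- y) = - q y" for y
  proof -
    have "sublinear_shift q y \<le> q"
      using sublinear_shift_le[OF q, of 0] by (simp add: le_fun_def)
    then have "sublinear_shift q y = q"
      using minimal sublinear_sublinear_shift[OF q] by blast
    then have "q (- y) \<le> - q y"
      using sublinear_shift_le[OF q, of 1 y "- y"] by (simp add: sublinear_zero[OF q])
    then show ?thesis using sublinear_neg_le[OF q, of y] by simp
  qed
  have "q (x + y) = q x + q y" for x y
    using sublinear_add_le[OF q, of x y] sublinear_add_le[OF q, of "- x" "- y"]
      odd[of "x + y"] odd[of x] odd[of y] by (simp add: algebra_simps)
  moreover have "q (c *\<^sub>R x) = c * q x" for c x
  proof (cases "0 \<le> c")
    case True
    then show ?thesis using sublinear_scaleR_nonneg[OF q] by blast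
  next
    case False
    have "q (c *\<^sub>R x) = q (- ((- c) *\<^sub>R x))" by simp
    also have "\<dots> = - q ((- c) *\<^sub>R x)" by (rule odd)
    also have "\<dots> = c * q x" using sublinear_scaleR_pos[OF q, of "- c"] False by simp
    finally show ?thesis .
  qed
  ultimately show ?thesis by (intro linearI) simp_all
qed

lemma hahn_banach_sublinear:
  assumes p: "sublinear (p :: 'a::real_vector \<Rightarrow> real)"
  obtains g where "linear g" "\<And>x. g x \<le> p x" "g z = p z"
proof -
  let ?s = "sublinear_shift p z"
  obtain m where m: "sublinear m" "m \<le> ?s" and minimal: "\<And>q. sublinear q \<Longrightarrow> q \<le> m \<Longrightarrow> q = m"
    using exists_minimal_sublinear_below[OF sublinear_sublinear_shift[OF p]] by blast
  have "linear m" using m(1) minimal by (rule minimal_sublinear_imp_linear)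
  have le_p: "m x \<le> p x" for x
  proof -
    have "m x \<le> ?s x" using m(2) by (simp add: le_fun_def)
    also have "\<dots> \<le> p x" using sublinear_shift_le[OF p, of 0] by simp
    finally show ?thesis .
  qed
  have "m (- z) \<le> - p z"
    using m(2) sublinear_shift_le[OF p, of 1 z "- z"]
    by (simp add: le_fun_def sublinear_zero[OF p]) (metis order_trans)
  then have "p z \<le> m z" using linear_neg[OF \<open>linear m\<close>] by simp
  then show ?thesis using that \<open>linear m\<close> le_p antisym by blast
qed

lemma exists_norming_functional:
  fixes x0 :: "'a::real_normed_vector"
  obtains xs :: "'a \<Rightarrow>\<^sub>L real" where "norm xs = norm x0" "blinfun_apply xs x0 = (norm x0)\<^sup>2"
proof -
  have "sublinear (\<lambda>x::'a. norm x0 * norm x)"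
    unfolding sublinear_def by (auto simp: norm_triangle_ineq mult_left_mono distrib_left[symmetric])
  then obtain g where g: "linear g" "\<And>x. g x \<le> norm x0 * norm x" "g x0 = norm x0 * norm x0"
    using hahn_banach_sublinear[where z = x0] by blast
  have abs_le: "\<bar>g x\<bar> \<le> norm x * norm x0" for x
    using g(2)[of x] g(2)[of "- x"] linear_neg[OF g(1), of x] by (simp add: abs_le_iff mult.commute)
  then have "bounded_linear g"
    using g(1) by (intro bounded_linear_intro[where K="norm x0"]) (auto simp: linear_add linear_scale)
  then have apply_Blinfun: "blinfun_apply (Blinfun g) = g" by (rule bounded_linear_Blinfun_apply)
  have "norm (Blinfun g) \<le> norm x0"
    using abs_le by (intro norm_blinfun_bound) (auto simp: apply_Blinfun mult.commute)
  moreover have "norm x0 * norm x0 \<le> norm (Blinfun g) * norm x0"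
    using norm_blinfun[of "Blinfun g" x0] apply_Blinfun g(3) by simp
  then have "norm x0 \<le> norm (Blinfun g)"
    by (cases "x0 = 0") auto
  ultimately show ?thesis
    using that[of "Blinfun g"] apply_Blinfun g(3) by (simp add: power2_eq_square)
qed

lemma numerically_positive_norm_le:
  assumes "numerically_positive T"
  shows "norm x \<le> norm (x + T x)"
proof -
  obtain xs :: "'a \<Rightarrow>\<^sub>L real" where xs: "norm xs = norm x" "blinfun_apply xs x = (norm x)\<^sup>2"
    by (rule exists_norming_functional)
  then have "0 \<le> blinfun_apply xs (T x)"
    using assms unfolding numerically_positive_def by auto
  then have "(norm x)\<^sup>2 \<le> blinfun_apply xs (x + T x)"
    using xs(2) by (simp add: blinfun.add_right)
  also have "\<dots> \<le> norm xs * norm (x + T x)"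
    using norm_blinfun[of xs "x + T x"] by simp
  finally have "norm x * norm x \<le> norm x * norm (x + T x)"
    using xs(1) by (simp add: power2_eq_square)
  then show ?thesis by (cases "x = 0") auto
qed

lemma flinn_functional_norm_le:
  fixes f :: "'a::real_normed_vector \<Rightarrow>\<^sub>L real"
  assumes np: "numerically_positive (\<lambda>x. blinfun_apply f x *\<^sub>R u)" and fu: "blinfun_apply f u = 1"
  shows "norm f * norm u \<le> 4"
proof -
  have one_sided: "blinfun_apply f z * norm u \<le> 4 * norm z" for z
  proof (cases "0 < blinfun_apply f z")
    case False
    then show ?thesis by (smt (verit) mult_nonpos_nonneg norm_ge_zero)
  next
    case True
    define a where "a = blinfun_apply f z"
    \<comment> \<open>\<open>x\<close> is chosen with \<open>f x = -1\<close>, so that \<open>x + f x *\<^sub>R u\<close> is a multiple of \<open>z\<close>.\<close>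
    define x where "x = u - (2 / a) *\<^sub>R z"
    have "blinfun_apply f x = -1"
      unfolding x_def a_def using fu True by (simp add: blinfun.diff_right blinfun.scaleR_right)
    then have "x + blinfun_apply f x *\<^sub>R u = - ((2 / a) *\<^sub>R z)"
      unfolding x_def by simp
    then have "norm x \<le> (2 / a) * norm z"
      using numerically_positive_norm_le[OF np, of x] True a_def by simp
    moreover have "norm u \<le> norm x + (2 / a) * norm z"
      using norm_triangle_ineq[of x "(2 / a) *\<^sub>R z"] True a_def unfolding x_def by simp
    ultimately have "norm u \<le> (4 / a) * norm z" by simp
    then have "a * norm u \<le> a * ((4 / a) * norm z)" using True a_def by (intro mult_left_mono) auto
    then show ?thesis using True a_def by simp
  qed
  have "u \<noteq> 0"
    using fu by auto
  then have "\<bar>blinfun_apply f y\<bar> \<le> 4 / norm u * norm y" for y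
    using one_sided[of y] one_sided[of "- y"] by (simp add: blinfun.minus_right abs_if field_simps)
  then have "norm f \<le> 4 / norm u"
    by (intro norm_blinfun_bound) auto
  then show ?thesis
    using \<open>u \<noteq> 0\<close> by (simp add: field_simps)
qed

lemma flinn_element_bounded_functional:
  fixes u :: "'a::real_normed_vector"
  assumes "flinn_element u" and "0 < c" and "c \<le> norm u"
  shows "\<exists>f :: 'a \<Rightarrow>\<^sub>L real. blinfun_apply f u = 1 \<and>
           numerically_positive (\<lambda>x. blinfun_apply f x *\<^sub>R u) \<and> norm f \<le> 4 / c"
proof -
  have "u \<noteq> 0"
    using assms(2,3) by auto
  then obtain f :: "'a \<Rightarrow>\<^sub>L real"
    where f: "blinfun_apply f u = 1" "numerically_positive (\<lambda>x. blinfun_apply f x *\<^sub>R u)"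
    using assms(1) unfolding flinn_element_def by blast
  have "norm f * c \<le> norm f * norm u"
    using assms(3) by (intro mult_left_mono) auto
  also have "\<dots> \<le> 4"
    using f(2,1) by (rule flinn_functional_norm_le)
  finally show ?thesis
    using f \<open>0 < c\<close> by (intro exI[of _ f]) (simp add: field_simps)
qed

(* Tychonoff replaces Banach-Alaoglu here; as 'a => real need not be first countable, cluster
   points of filters take the place of convergent subsequences. *)
lemma pointwise_bounded_cluster_point:
  fixes h :: "'i \<Rightarrow> 'a::real_normed_vector \<Rightarrow> real"
  assumes "F \<noteq> bot" and "eventually (\<lambda>m. \<forall>y. \<bar>h m y\<bar> \<le> B * norm y) F"
  obtains \<phi> where "\<And>y. \<bar>\<phi> y\<bar> \<le> B * norm y" "inf (nhds \<phi>) (filtermap h F) \<noteq> bot"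
proof -
  define U where "U = PiE UNIV (\<lambda>y::'a. cball (0::real) (B * norm y))"
  have "compactin (product_topology (\<lambda>_. euclidean) UNIV) U"
    unfolding U_def compactin_PiE by auto
  then have "compact U"
    by (metis euclidean_product_topology compactin_euclidean_iff)
  moreover have "eventually (\<lambda>\<psi>. \<psi> \<in> U) (filtermap h F)"
    using assms(2) unfolding eventually_filtermap U_def PiE_UNIV_domain
    by eventually_elim (simp add: dist_real_def)
  ultimately obtain \<phi> where "\<phi> \<in> U" "inf (nhds \<phi>) (filtermap h F) \<noteq> bot"
    using \<open>F \<noteq> bot\<close> unfolding compact_filter by (metis filtermap_bot_iff)
  then show ?thesis
    by (intro that[of \<phi>]) (auto simp: U_def PiE_UNIV_domain Pi_iff dist_real_def)
qed

lemma cluster_point_ge: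
  fixes h :: "'i \<Rightarrow> 'b::topological_space" and G :: "'b \<Rightarrow> real"
  assumes cluster: "inf (nhds \<phi>) (filtermap h F) \<noteq> bot" and G: "continuous_on UNIV G"
    and a: "(a \<longlongrightarrow> c) F" and "eventually (\<lambda>m. a m \<le> G (h m)) F"
  shows "c \<le> G \<phi>"
proof (rule ccontr)
  assume "\<not> c \<le> G \<phi>"
  define d where "d = (G \<phi> + c) / 2"
  have "open {\<psi>. G \<psi> < d}"
    using G by (intro open_Collect_less) (auto intro: continuous_on_const)
  moreover have "\<phi> \<in> {\<psi>. G \<psi> < d}"
    using \<open>\<not> c \<le> G \<phi>\<close> by (simp add: d_def)
  ultimately have "eventually (\<lambda>\<psi>. \<psi> \<in> {\<psi>. G \<psi> < d}) (nhds \<phi>)"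
    by (rule eventually_nhds_in_open)
  moreover have "eventually (\<lambda>m. d < a m) F"
    using a \<open>\<not> c \<le> G \<phi>\<close> by (intro order_tendstoD) (auto simp: d_def)
  then have "eventually (\<lambda>\<psi>. d \<le> G \<psi>) (filtermap h F)"
    using assms(4) unfolding eventually_filtermap by eventually_elim simp
  ultimately have "eventually (\<lambda>_. False) (inf (nhds \<phi>) (filtermap h F))"
    unfolding eventually_inf mem_Collect_eq by fastforce
  then show False using cluster by (simp add: eventually_False)
qed

lemma cluster_point_tendsto_eq:
  fixes h :: "'i \<Rightarrow> 'b::topological_space" and G :: "'b \<Rightarrow> real"
  assumes "inf (nhds \<phi>) (filtermap h F) \<noteq> bot" and "continuous_on UNIV G"
    and "((\<lambda>m. G (h m)) \<longlongrightarrow> c) F"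
  shows "G \<phi> = c"
proof (rule antisym)
  show "c \<le> G \<phi>"
    using assms by (rule cluster_point_ge) simp
  have "- c \<le> - G \<phi>"
    using assms(1) continuous_on_minus[OF assms(2)] tendsto_minus[OF assms(3)]
    by (rule cluster_point_ge) simp
  then show "G \<phi> \<le> c" by simp
qed

lemma cluster_point_linear:
  fixes h :: "'i \<Rightarrow> 'a::real_vector \<Rightarrow> real"
  assumes cluster: "inf (nhds \<phi>) (filtermap h F) \<noteq> bot" and "eventually (\<lambda>m. linear (h m)) F"
  shows "linear \<phi>"
proof
  fix x y
  have "eventually (\<lambda>m. h m (x + y) - h m x - h m y = 0) F"
    using assms(2) by eventually_elim (simp add: linear_add)
  then have "((\<lambda>m. h m (x + y) - h m x - h m y) \<longlongrightarrow> 0) F"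
    by (rule tendsto_eventually)
  then have "\<phi> (x + y) - \<phi> x - \<phi> y = 0"
    by (rule cluster_point_tendsto_eq[OF cluster, where G = "\<lambda>\<psi>. \<psi> (x + y) - \<psi> x - \<psi> y", rotated])
      (intro continuous_intros continuous_on_product_coordinates)
  then show "\<phi> (x + y) = \<phi> x + \<phi> y" by simp
next
  fix c x
  have "eventually (\<lambda>m. h m (c *\<^sub>R x) - c * h m x = 0) F"
    using assms(2) by eventually_elim (simp add: linear_scale)
  then have "((\<lambda>m. h m (c *\<^sub>R x) - c * h m x) \<longlongrightarrow> 0) F"
    by (rule tendsto_eventually)
  then have "\<phi> (c *\<^sub>R x) - c * \<phi> x = 0"
    by (rule cluster_point_tendsto_eq[OF cluster, where G = "\<lambda>\<psi>. \<psi> (c *\<^sub>R x) - c * \<psi> x", rotated])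
      (intro continuous_intros continuous_on_product_coordinates)
  then show "\<phi> (c *\<^sub>R x) = c *\<^sub>R \<phi> x" by simp
qed

lemma blinfun_bounded_cluster_point:
  fixes g :: "'i \<Rightarrow> 'a::real_normed_vector \<Rightarrow>\<^sub>L real"
  assumes "F \<noteq> bot" and "eventually (\<lambda>m. norm (g m) \<le> B) F"
  obtains \<phi> where "bounded_linear \<phi>" "inf (nhds \<phi>) (filtermap (\<lambda>m. blinfun_apply (g m)) F) \<noteq> bot"
proof -
  have "eventually (\<lambda>m. \<forall>y. \<bar>blinfun_apply (g m) y\<bar> \<le> B * norm y) F"
    using assms(2) by eventually_elim (metis norm_blinfun real_norm_def mult_right_mono norm_ge_zero order_trans)
  with \<open>F \<noteq> bot\<close> obtain \<phi> where \<phi>_bound: "\<And>y. \<bar>\<phi> y\<bar> \<le> B * norm y"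
    and cluster: "inf (nhds \<phi>) (filtermap (\<lambda>m. blinfun_apply (g m)) F) \<noteq> bot"
    by (rule pointwise_bounded_cluster_point) blast
  have "linear \<phi>"
    using cluster by (rule cluster_point_linear) (simp add: bounded_linear.linear blinfun.bounded_linear_right)
  with \<phi>_bound have "bounded_linear \<phi>"
    by (intro bounded_linear_intro[where K = B]) (auto simp: linear_add linear_scale mult.commute)
  then show ?thesis using that cluster by blast
qed

lemma tendsto_blinfun_apply_diff_zero:
  fixes g :: "'i \<Rightarrow> 'a::real_normed_vector \<Rightarrow>\<^sub>L real"
  assumes "(u \<longlongrightarrow> l) F" and "eventually (\<lambda>m. norm (g m) \<le> B) F"
  shows "((\<lambda>m. blinfun_apply (g m) (l - u m)) \<longlongrightarrow> 0) F"
proof (rule Lim_null_comparison)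
  show "((\<lambda>m. B * norm (l - u m)) \<longlongrightarrow> 0) F"
    using tendsto_mult_right_zero[OF tendsto_norm_zero[OF LIM_zero[OF assms(1)]]]
    by (simp add: norm_minus_commute)
  show "eventually (\<lambda>m. norm (blinfun_apply (g m) (l - u m)) \<le> B * norm (l - u m)) F"
    using assms(2) by eventually_elim (metis norm_blinfun mult_right_mono norm_ge_zero order_trans)
qed

lemma numerically_positive_rank_one_cluster_point:
  fixes g :: "'i \<Rightarrow> 'a::real_normed_vector \<Rightarrow>\<^sub>L real"
  assumes cluster: "inf (nhds \<phi>) (filtermap (\<lambda>m. blinfun_apply (g m)) F) \<noteq> bot"
    and "bounded_linear \<phi>" and lim: "(u \<longlongrightarrow> l) F" and bound: "eventually (\<lambda>m. norm (g m) \<le> B) F"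
    and np: "eventually (\<lambda>m. numerically_positive (\<lambda>x. blinfun_apply (g m) x *\<^sub>R u m)) F"
  shows "numerically_positive (\<lambda>x. \<phi> x *\<^sub>R l)"
  unfolding numerically_positive_def
proof (intro conjI allI impI)
  show "bounded_linear (\<lambda>x. \<phi> x *\<^sub>R l)"
    using bounded_linear_scaleR_left \<open>bounded_linear \<phi>\<close> by (rule bounded_linear_compose)
  fix x and xs :: "'a \<Rightarrow>\<^sub>L real"
  assume dual: "(norm xs)\<^sup>2 = (norm x)\<^sup>2 \<and> (norm x)\<^sup>2 = blinfun_apply xs x"
  have null: "((\<lambda>m. blinfun_apply (blinfun_apply (g m) x *\<^sub>R xs) (l - u m)) \<longlongrightarrow> 0) F"
  proof (rule tendsto_blinfun_apply_diff_zero[OF lim])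
    show "eventually (\<lambda>m. norm (blinfun_apply (g m) x *\<^sub>R xs) \<le> B * norm x * norm xs) F"
      using bound
    proof eventually_elim
      case (elim m)
      have "\<bar>blinfun_apply (g m) x\<bar> \<le> B * norm x"
        using norm_blinfun[of "g m" x] elim by (simp add: mult_right_mono order_trans)
      then show ?case by (simp add: mult_right_mono)
    qed
  qed
  have "0 \<le> \<phi> x * blinfun_apply xs l"
  proof (rule cluster_point_ge[OF cluster])
    show "((\<lambda>m. blinfun_apply (g m) x * blinfun_apply xs (l - u m)) \<longlongrightarrow> 0) F"
      using null by (simp add: scaleR_blinfun.rep_eq)
    show "eventually (\<lambda>m. blinfun_apply (g m) x * blinfun_apply xs (l - u m)
                          \<le> blinfun_apply (g m) x * blinfun_apply xs l) F"
      using np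
    proof eventually_elim
      case (elim m)
      then have "0 \<le> blinfun_apply (g m) x * blinfun_apply xs (u m)"
        using dual unfolding numerically_positive_def by (simp add: blinfun.scaleR_right)
      then show ?case by (simp add: blinfun.diff_right right_diff_distrib)
    qed
  qed (intro continuous_intros continuous_on_product_coordinates)
  then show "0 \<le> blinfun_apply xs (\<phi> x *\<^sub>R l)"
    by (simp add: blinfun.scaleR_right)
qed

lemma flinn_element_limit:
  fixes u :: "'i \<Rightarrow> 'a::real_normed_vector"
  assumes "F \<noteq> bot" and lim: "(u \<longlongrightarrow> l) F"
    and "eventually (\<lambda>m. \<exists>f :: 'a \<Rightarrow>\<^sub>L real. blinfun_apply f (u m) = 1 \<and>
           numerically_positive (\<lambda>x. blinfun_apply f x *\<^sub>R u m) \<and> norm f \<le> B) F"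
  shows "flinn_element l"
proof -
  define Q where "Q m f \<longleftrightarrow> blinfun_apply f (u m) = 1 \<and>
    numerically_positive (\<lambda>x. blinfun_apply f x *\<^sub>R u m) \<and> norm f \<le> B" for m f
  define g where "g m = (SOME f. Q m f)" for m
  have "eventually (\<lambda>m. Q m (g m)) F"
    using assms(3) unfolding Q_def[symmetric] g_def by eventually_elim (rule someI_ex)
  then have flinn: "eventually (\<lambda>m. blinfun_apply (g m) (u m) = 1) F"
    and np: "eventually (\<lambda>m. numerically_positive (\<lambda>x. blinfun_apply (g m) x *\<^sub>R u m)) F"
    and bound: "eventually (\<lambda>m. norm (g m) \<le> B) F"
    unfolding Q_def by (auto elim: eventually_mono)
  obtain \<phi> where "bounded_linear \<phi>"
    and cluster: "inf (nhds \<phi>) (filtermap (\<lambda>m. blinfun_apply (g m)) F) \<noteq> bot"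
    using blinfun_bounded_cluster_point[OF \<open>F \<noteq> bot\<close> bound] by blast
  have "eventually (\<lambda>m. blinfun_apply (g m) (l - u m) = blinfun_apply (g m) l - 1) F"
    using flinn by eventually_elim (simp add: blinfun.diff_right)
  with tendsto_blinfun_apply_diff_zero[OF lim bound]
  have "((\<lambda>m. blinfun_apply (g m) l - 1) \<longlongrightarrow> 0) F"
    by (rule Lim_transform_eventually)
  then have "\<phi> l - 1 = 0"
    by (rule cluster_point_tendsto_eq[OF cluster, where G = "\<lambda>\<psi>. \<psi> l - 1", rotated])
      (intro continuous_intros continuous_on_product_coordinates)
  moreover have "numerically_positive (\<lambda>x. \<phi> x *\<^sub>R l)"
    using cluster \<open>bounded_linear \<phi>\<close> lim bound np by (rule numerically_positive_rank_one_cluster_point)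
  ultimately show ?thesis
    unfolding flinn_element_def using bounded_linear_Blinfun_apply[OF \<open>bounded_linear \<phi>\<close>]
    by (metis eq_iff_diff_eq_0)
qed

theorem proposition2p4:
  shows "closed (flinn_set :: 'a::banach set)"
  unfolding closed_sequential_limits flinn_set_def mem_Collect_eq
proof (intro allI impI, elim conjE)
  fix u :: "nat \<Rightarrow> 'a" and l :: 'a
  assume flinn: "\<forall>m. flinn_element (u m)" and lim: "u \<longlonglongrightarrow> l"
  show "flinn_element l"
  proof (cases "l = 0")
    case True
    then show ?thesis by (simp add: flinn_element_def)
  next
    case False
    have "eventually (\<lambda>m. norm l / 2 < norm (u m)) sequentially"
      using tendsto_norm[OF lim] False by (intro order_tendstoD) auto
    then show ?thesis
      by (intro flinn_element_limit[OF trivial_limit_sequentially lim, where B = "4 / (norm l / 2)"])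
        (erule eventually_mono, rule flinn_element_bounded_functional, use flinn False in auto)
  qed
qed

end
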